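(* There exist finite simple undirected graphs $G_1$, $G_2$ and an integer $\alpha \ge 1$ such that 1-WL does not distinguish $G_1$ and $G_2$ (for every $i \ge 0$ the multisets of 1-WL colours $\{\!\{ c^i_v : v \in V_1\}\!\}$ and $\{\!\{ c^i_v : v \in V_2\}\!\}$ coincide), but $G_1$ and $G_2$ are not $\textsc{Igel}$-equivalent for $\alpha$.
   Context: Graphs $G=(V,E)$ are finite, simple and undirected; $d_G(v)$ is the degree of $v$ in $G$, $l_G(u,v)$ the shortest-path distance, $\{\!\{\cdot\}\!\}$ denotes a multiset, and $\mathcal{N}^\alpha_G(v) = \{u \in V : l_G(u,v) \le \alpha\}$. The $\alpha$-depth ego-network $\mathcal{E}^\alpha_v$ of $v$ is the subgraph of $G$ induced by $\mathcal{N}^\alpha_G(v)$. 1-WL (colour refinement): fix an injective map $\mathrm{hash}$ from finite multisets to colours, used simultaneously for both graphs. Initially $c^0_v = \mathrm{hash}(\{\!\{ d_G(v)\}\!\})$, and for $i \ge 0$, $c^{i+1}_v = \mathrm{hash}(\{\!\{ c^i_u : u \in \mathcal{N}^1_G(v),\ u \ne v\}\!\})$. $\textsc{Igel}$ encoding with parameter $\alpha \ge 1$: $e^0_v = \{\!\{(0, d_G(v))\}\!\}$, and for $i = 1,\dots,\alpha$, $e^i_v = e^{i-1}_v \cup \{\!\{ (i, d_{\mathcal{E}^\alpha_v}(u)) : u \in \mathcal{N}^\alpha_G(v),\ l_G(u,v) = i\}\!\}$ (multiset union), where $d_{\mathcal{E}^\alpha_v}(u)$ is the degree of $u$ inside $\mathcal{E}^\alpha_v$.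 Two graphs $G_1=(V_1,E_1)$, $G_2=(V_2,E_2)$ are $\textsc{Igel}$-equivalent for $\alpha$ if $\{\!\{ e^\alpha_{v} : v \in V_1\}\!\} = \{\!\{ e^\alpha_{v} : v \in V_2\}\!\}$. *)

theory Defs
  imports Main "HOL-Library.Multiset" "HOL-Library.Extended_Nat"
begin

definition simple_graph :: "'a set \<Rightarrow> ('a \<Rightarrow> 'a \<Rightarrow> bool) \<Rightarrow> bool" where
  "simple_graph V E \<longleftrightarrow> finite V \<and> (\<forall>u v. E u v \<longrightarrow> E v u) \<and> (\<forall>v. \<not> E v v)
     \<and> (\<forall>u v. E u v \<longrightarrow> u \<in> V \<and> v \<in> V)"

definition deg :: "'a set \<Rightarrow> ('a \<Rightarrow> 'a \<Rightarrow> bool) \<Rightarrow> 'a \<Rightarrow> nat" where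
  "deg V E v = card {u \<in> V. E v u}"

fun reach :: "'a set \<Rightarrow> ('a \<Rightarrow> 'a \<Rightarrow> bool) \<Rightarrow> nat \<Rightarrow> 'a \<Rightarrow> 'a \<Rightarrow> bool" where
  "reach V E 0 u v = (u = v \<and> u \<in> V)"
| "reach V E (Suc k) u v = (reach V E k u v \<or> (\<exists>w. reach V E k u w \<and> E w v))"

definition gdist :: "'a set \<Rightarrow> ('a \<Rightarrow> 'a \<Rightarrow> bool) \<Rightarrow> 'a \<Rightarrow> 'a \<Rightarrow> enat" where
  "gdist V E u v = (if \<exists>k. reach V E k u v then enat (LEAST k. reach V E k u v) else \<infinity>)"

definition nbhd :: "'a set \<Rightarrow> ('a \<Rightarrow> 'a \<Rightarrow> bool) \<Rightarrow> nat \<Rightarrow> 'a \<Rightarrow> 'a set" where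
  "nbhd V E \<alpha> v = {u \<in> V. gdist V E u v \<le> enat \<alpha>}"

text \<open>Degree of u inside the alpha-depth ego-network of v (induced subgraph on nbhd).\<close>
definition ego_deg :: "'a set \<Rightarrow> ('a \<Rightarrow> 'a \<Rightarrow> bool) \<Rightarrow> nat \<Rightarrow> 'a \<Rightarrow> 'a \<Rightarrow> nat" where
  "ego_deg V E \<alpha> v u = card {w \<in> nbhd V E \<alpha> v. E u w}"

text \<open>1-WL colours, for a fixed (injective) hash from finite multisets to colours.\<close>
fun wl_col :: "(nat multiset \<Rightarrow> nat) \<Rightarrow> 'a set \<Rightarrow> ('a \<Rightarrow> 'a \<Rightarrow> bool) \<Rightarrow> nat \<Rightarrow> 'a \<Rightarrow> nat" where
  "wl_col h V E 0 v = h {# deg V E v #}"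
| "wl_col h V E (Suc i) v = h (image_mset (wl_col h V E i) (mset_set {u \<in> V. E v u}))"

fun igel_enc :: "'a set \<Rightarrow> ('a \<Rightarrow> 'a \<Rightarrow> bool) \<Rightarrow> nat \<Rightarrow> nat \<Rightarrow> 'a \<Rightarrow> (nat \<times> nat) multiset" where
  "igel_enc V E \<alpha> 0 v = {# (0, deg V E v) #}"
| "igel_enc V E \<alpha> (Suc i) v = igel_enc V E \<alpha> i v +
     image_mset (\<lambda>u. (Suc i, ego_deg V E \<alpha> v u))
       (mset_set {u \<in> nbhd V E \<alpha> v. gdist V E u v = enat (Suc i)})"

definition wl_equiv :: "(nat multiset \<Rightarrow> nat) \<Rightarrow> 'a set \<Rightarrow> ('a \<Rightarrow> 'a \<Rightarrow> bool)
    \<Rightarrow> 'b set \<Rightarrow> ('b \<Rightarrow> 'b \<Rightarrow> bool) \<Rightarrow> bool" where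
  "wl_equiv h V1 E1 V2 E2 \<longleftrightarrow>
     (\<forall>i. image_mset (wl_col h V1 E1 i) (mset_set V1) = image_mset (wl_col h V2 E2 i) (mset_set V2))"

definition igel_equiv :: "nat \<Rightarrow> 'a set \<Rightarrow> ('a \<Rightarrow> 'a \<Rightarrow> bool)
    \<Rightarrow> 'b set \<Rightarrow> ('b \<Rightarrow> 'b \<Rightarrow> bool) \<Rightarrow> bool" where
  "igel_equiv \<alpha> V1 E1 V2 E2 \<longleftrightarrow>
     image_mset (igel_enc V1 E1 \<alpha> \<alpha>) (mset_set V1) = image_mset (igel_enc V2 E2 \<alpha> \<alpha>) (mset_set V2)"

end

theory Submission
  imports Defs
begin

text \<open>The 6-cycle and two disjoint triangles are both 2-regular on six vertices, so colour
  refinement gives all twelve vertices the same colour in every round, for any hash whatsoever.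
  For \<open>\<alpha> = 1\<close>, however, a neighbour \<open>u\<close> of \<open>v\<close> has degree one plus the number of common
  neighbours of \<open>u\<close> and \<open>v\<close> inside the ego-network of \<open>v\<close>: that is 1 in the 6-cycle,
  which has no triangles, and 2 in a triangle.\<close>

lemma image_mset_mset_set_const:
  assumes "\<And>x. x \<in> A \<Longrightarrow> f x = c"
  shows "image_mset f (mset_set A) = replicate_mset (card A) c"
proof (cases "finite A")
  case True
  then have "image_mset f (mset_set A) = image_mset (\<lambda>_. c) (mset_set A)"
    using assms by (intro image_mset_cong) auto
  then show ?thesis by (simp add: image_mset_const_eq)
qed simp

lemma reach_mono:
  assumes "reach V E k u v" "k \<le> m"
  shows "reach V E m u v"
  using assms(2,1) by (induction m rule: dec_induct) auto

lemma reach_one_iff: "reach V E 1 u v \<longleftrightarrow> u \<in> V \<and> (u = v \<or> E u v)"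
  unfolding One_nat_def by auto

lemma gdist_le_enat_iff: "gdist V E u v \<le> enat k \<longleftrightarrow> reach V E k u v"
proof
  assume le: "gdist V E u v \<le> enat k"
  then have ex: "\<exists>j. reach V E j u v"
    by (auto simp: gdist_def split: if_splits)
  with le have "(LEAST j. reach V E j u v) \<le> k"
    by (simp add: gdist_def)
  with LeastI_ex[OF ex] show "reach V E k u v"
    by (rule reach_mono)
next
  assume "reach V E k u v"
  then show "gdist V E u v \<le> enat k"
    by (auto simp: gdist_def intro: Least_le)
qed

lemma gdist_eq_enat_Suc_iff:
  "gdist V E u v = enat (Suc k) \<longleftrightarrow> reach V E (Suc k) u v \<and> \<not> reach V E k u v"
  using gdist_le_enat_iff[of V E u v k] gdist_le_enat_iff[of V E u v "Suc k"]
  by (cases "gdist V E u v") auto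

definition codegree :: "'a set \<Rightarrow> ('a \<Rightarrow> 'a \<Rightarrow> bool) \<Rightarrow> 'a \<Rightarrow> 'a \<Rightarrow> nat" where
  "codegree V E u v = card {w \<in> V. E u w \<and> E v w}"

lemma nbhd_one:
  assumes "simple_graph V E"
  shows "nbhd V E 1 v = {u \<in> V. u = v \<or> E v u}"
  using assms by (auto simp: nbhd_def gdist_le_enat_iff reach_one_iff simple_graph_def)

lemma sphere_one:
  assumes "simple_graph V E"
  shows "{u \<in> nbhd V E 1 v. gdist V E u v = enat 1} = {u \<in> V. E v u}"
  unfolding nbhd_one[OF assms] using assms gdist_eq_enat_Suc_iff[of V E _ v 0]
  by (auto simp: reach_one_iff simple_graph_def)

lemma ego_deg_one:
  assumes "simple_graph V E" "E v u"
  shows "ego_deg V E 1 v u = Suc (codegree V E v u)"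
proof -
  have "{w \<in> nbhd V E 1 v. E u w} = insert v {w \<in> V. E v w \<and> E u w}"
    unfolding nbhd_one[OF assms(1)] using assms by (auto simp: simple_graph_def)
  moreover have "v \<notin> {w \<in> V. E v w \<and> E u w}" "finite {w \<in> V. E v w \<and> E u w}"
    using assms(1) by (auto simp: simple_graph_def)
  ultimately show ?thesis
    unfolding ego_deg_def codegree_def by simp
qed

lemma igel_enc_one:
  assumes "simple_graph V E"
  shows "igel_enc V E 1 1 v
    = add_mset (0, deg V E v) {#(1, ego_deg V E 1 v u). u \<in># mset_set {u \<in> V. E v u}#}"
  using sphere_one[OF assms, of v] by simp

lemma igel_enc_one_const_codegree:
  assumes "simple_graph V E" "deg V E v = d" "\<And>u. u \<in> V \<Longrightarrow> E v u \<Longrightarrow> codegree V E v u = c"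
  shows "igel_enc V E 1 1 v = add_mset (0, d) (replicate_mset d (1, Suc c))"
proof -
  have "ego_deg V E 1 v u = Suc c" if "u \<in> V" "E v u" for u
    using ego_deg_one[OF assms(1) that(2)] assms(3)[OF that] by simp
  then have neighbour_encs: "{#(1, ego_deg V E 1 v u). u \<in># mset_set {u \<in> V. E v u}#}
      = replicate_mset (deg V E v) (1, Suc c)"
    unfolding deg_def by (intro image_mset_mset_set_const) auto
  show ?thesis
    unfolding igel_enc_one[OF assms(1)] neighbour_encs assms(2) by (rule refl)
qed

fun regular_wl_col :: "(nat multiset \<Rightarrow> nat) \<Rightarrow> nat \<Rightarrow> nat \<Rightarrow> nat" where
  "regular_wl_col h d 0 = h {#d#}"
| "regular_wl_col h d (Suc i) = h (replicate_mset d (regular_wl_col h d i))"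

lemma wl_col_regular:
  assumes "\<And>v. v \<in> V \<Longrightarrow> deg V E v = d" "v \<in> V"
  shows "wl_col h V E i v = regular_wl_col h d i"
  using assms(2)
proof (induction i arbitrary: v)
  case 0
  then show ?case by (simp add: assms(1))
next
  case (Suc i)
  then have "image_mset (wl_col h V E i) (mset_set {u \<in> V. E v u})
      = replicate_mset (deg V E v) (regular_wl_col h d i)"
    unfolding deg_def by (intro image_mset_mset_set_const) auto
  with Suc.prems show ?case by (simp add: assms(1))
qed

lemma wl_equiv_regular:
  assumes "\<And>v. v \<in> V1 \<Longrightarrow> deg V1 E1 v = d" "\<And>v. v \<in> V2 \<Longrightarrow> deg V2 E2 v = d"
    and "card V1 = card V2"
  shows "wl_equiv h V1 E1 V2 E2"
  unfolding wl_equiv_def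
proof
  fix i
  have "image_mset (wl_col h V1 E1 i) (mset_set V1) = replicate_mset (card V1) (regular_wl_col h d i)"
    "image_mset (wl_col h V2 E2 i) (mset_set V2) = replicate_mset (card V2) (regular_wl_col h d i)"
    using wl_col_regular[OF assms(1)] wl_col_regular[OF assms(2)]
    by (auto intro: image_mset_mset_set_const)
  with assms(3)
  show "image_mset (wl_col h V1 E1 i) (mset_set V1) = image_mset (wl_col h V2 E2 i) (mset_set V2)"
    by simp
qed

definition hexagon :: "nat \<Rightarrow> nat \<Rightarrow> bool" where
  "hexagon u v \<longleftrightarrow> u < 6 \<and> v < 6 \<and> (v = Suc u mod 6 \<or> u = Suc v mod 6)"

definition two_triangles :: "nat \<Rightarrow> nat \<Rightarrow> bool" where
  "two_triangles u v \<longleftrightarrow> u < 6 \<and> v < 6 \<and> u \<noteq> v \<and> u div 3 = v div 3"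

lemma lessThan_6: "{..<6::nat} = {0, 1, 2, 3, 4, 5}"
  by auto

lemma Collect_mem_insert:
  "{x \<in> insert a A. P x} = (if P a then insert a {x \<in> A. P x} else {x \<in> A. P x})"
  by auto

lemma simple_graph_hexagon: "simple_graph {..<6} hexagon"
  unfolding simple_graph_def hexagon_def by (auto simp: mod_Suc)

lemma simple_graph_two_triangles: "simple_graph {..<6} two_triangles"
  unfolding simple_graph_def two_triangles_def by auto

text \<open>The concrete counts are evaluated vertex by vertex: \<open>Collect_mem_insert\<close> must turn the
  filtered sets into explicit finite sets before the simplifier rewrites membership in
  \<open>{0, 1, 2, 3, 4, 5}\<close> into a disjunction, after which \<open>card\<close> no longer evaluates.\<close>

lemma deg_hexagon: "\<forall>v \<in> {..<6}. deg {..<6} hexagon v = 2"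
  unfolding deg_def lessThan_6 ball_simps
  by (simp only: Collect_mem_insert; simp add: hexagon_def)

lemma deg_two_triangles: "\<forall>v \<in> {..<6}. deg {..<6} two_triangles v = 2"
  unfolding deg_def lessThan_6 ball_simps
  by (simp only: Collect_mem_insert; simp add: two_triangles_def)

lemma codegree_hexagon:
  "\<forall>v \<in> {..<6}. \<forall>u \<in> {..<6}. hexagon v u \<longrightarrow> codegree {..<6} hexagon v u = 0"
  unfolding codegree_def lessThan_6 ball_simps
  by (simp only: Collect_mem_insert; simp add: hexagon_def)

lemma codegree_two_triangles:
  "\<forall>v \<in> {..<6}. \<forall>u \<in> {..<6}. two_triangles v u \<longrightarrow> codegree {..<6} two_triangles v u = 1"
  unfolding codegree_def lessThan_6 ball_simps
  by (simp only: Collect_mem_insert; simp add: two_triangles_def)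

theorem lemma2:
  fixes hash :: "nat multiset \<Rightarrow> nat"
  assumes "inj hash"
  shows "\<exists>(V1 :: nat set) E1 (V2 :: nat set) E2 (\<alpha> :: nat).
           simple_graph V1 E1 \<and> simple_graph V2 E2 \<and> \<alpha> \<ge> 1 \<and>
           wl_equiv hash V1 E1 V2 E2 \<and> \<not> igel_equiv \<alpha> V1 E1 V2 E2"
proof (intro exI conjI)
  show "simple_graph {..<6} hexagon" "simple_graph {..<6} two_triangles"
    by (fact simple_graph_hexagon simple_graph_two_triangles)+
  show "wl_equiv hash {..<6} hexagon {..<6} two_triangles"
    using deg_hexagon deg_two_triangles by (intro wl_equiv_regular) auto
  have "igel_enc {..<6} hexagon 1 1 v = add_mset (0, 2) (replicate_mset 2 (1, Suc 0))" if "v < 6" for v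
    using that deg_hexagon codegree_hexagon simple_graph_hexagon
    by (intro igel_enc_one_const_codegree) (auto simp: hexagon_def)
  then have hexagon_encs: "image_mset (igel_enc {..<6} hexagon 1 1) (mset_set {..<6})
      = replicate_mset 6 (add_mset (0, 2) (replicate_mset 2 (1, Suc 0)))"
    by (subst image_mset_mset_set_const) auto
  have "igel_enc {..<6} two_triangles 1 1 v = add_mset (0, 2) (replicate_mset 2 (1, Suc 1))" if "v < 6" for v
    using that deg_two_triangles codegree_two_triangles simple_graph_two_triangles
    by (intro igel_enc_one_const_codegree) (auto simp: two_triangles_def)
  then have two_triangles_encs: "image_mset (igel_enc {..<6} two_triangles 1 1) (mset_set {..<6})
      = replicate_mset 6 (add_mset (0, 2) (replicate_mset 2 (1, Suc 1)))"
    by (subst image_mset_mset_set_const) auto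
  show "\<not> igel_equiv 1 {..<6} hexagon {..<6} two_triangles"
    unfolding igel_equiv_def hexagon_encs two_triangles_encs
    by (simp add: replicate_mset_eq_iff)
qed simp

end
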